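(* Let $P$ and $Q$ be irreducible transition matrices on the finite set $S$, both reversible with respect to $\pi$. If $P$ efficiency-dominates $Q$, then $P$ eigen-dominates $Q$.
   Context: $S$ is a finite set with $|S|=n$, and $\pi$ is a probability distribution on $S$ with $\pi(x)>0$ for all $x$. A transition matrix $P$ is reversible with respect to $\pi$ if $\pi(x)P(x,y)=\pi(y)P(y,x)$ for all $x,y$ (its eigenvalues are then real); irreducible if every state can be reached from every other with positive probability in some number of steps. For a Markov chain $X_1,X_2,\dots$ with transition matrix $P$ and $X_1\sim\pi$, $v(f,P)=\lim_{N\to\infty}\frac1N\mathrm{Var}\big(\sum_{i=1}^N f(X_i)\big)$. $P$ efficiency-dominates $Q$ if $v(f,P)\le v(f,Q)$ for all $f:S\to\mathbb R$. For reversible $P,Q$, $P$ eigen-dominates $Q$ if, writing the eigenvalues (with multiplicity) of $P$ as $\lambda_1\ge\dots\ge\lambda_n$ and those of $Q$ as $\beta_1\ge\dots\ge\beta_n$, we have $\lambda_i\le\beta_i$ for every $i$. *)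

theory Defs
  imports "Jordan_Normal_Form.Char_Poly" "HOL-Library.FuncSet"
begin

text \<open>The state space S is identified with {0..<n}; matrices are n x n real matrices.\<close>

definition prob_dist :: "nat \<Rightarrow> (nat \<Rightarrow> real) \<Rightarrow> bool" where
  "prob_dist n \<pi> \<longleftrightarrow> (\<forall>x<n. \<pi> x > 0) \<and> (\<Sum>x<n. \<pi> x) = 1"

definition transition_matrix :: "nat \<Rightarrow> real mat \<Rightarrow> bool" where
  "transition_matrix n P \<longleftrightarrow> P \<in> carrier_mat n n \<and>
     (\<forall>x<n. \<forall>y<n. P $$ (x,y) \<ge> 0) \<and> (\<forall>x<n. (\<Sum>y<n. P $$ (x,y)) = 1)"

definition reversible :: "nat \<Rightarrow> (nat \<Rightarrow> real) \<Rightarrow> real mat \<Rightarrow> bool" where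
  "reversible n \<pi> P \<longleftrightarrow> (\<forall>x<n. \<forall>y<n. \<pi> x * P $$ (x,y) = \<pi> y * P $$ (y,x))"

definition irreducible_mc :: "nat \<Rightarrow> real mat \<Rightarrow> bool" where
  "irreducible_mc n P \<longleftrightarrow> (\<forall>x<n. \<forall>y<n. \<exists>k. (P ^\<^sub>m k) $$ (x,y) > 0)"

text \<open>Law of the path (X_1,...,X_N) (indexed 0..N-1) of the chain started in \<pi>.\<close>
definition path_prob :: "(nat \<Rightarrow> real) \<Rightarrow> real mat \<Rightarrow> nat \<Rightarrow> (nat \<Rightarrow> nat) \<Rightarrow> real" where
  "path_prob \<pi> P N p = \<pi> (p 0) * (\<Prod>i<N - 1. P $$ (p i, p (Suc i)))"

definition path_expect :: "nat \<Rightarrow> (nat \<Rightarrow> real) \<Rightarrow> real mat \<Rightarrow> nat \<Rightarrow> ((nat \<Rightarrow> nat) \<Rightarrow> real) \<Rightarrow> real" where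
  "path_expect n \<pi> P N g = (\<Sum>p\<in>PiE {..<N} (\<lambda>_. {..<n}). path_prob \<pi> P N p * g p)"

definition var_sum :: "nat \<Rightarrow> (nat \<Rightarrow> real) \<Rightarrow> real mat \<Rightarrow> (nat \<Rightarrow> real) \<Rightarrow> nat \<Rightarrow> real" where
  "var_sum n \<pi> P f N =
     path_expect n \<pi> P N (\<lambda>p. (\<Sum>i<N. f (p i))^2) - (path_expect n \<pi> P N (\<lambda>p. \<Sum>i<N. f (p i)))^2"

definition asym_var :: "nat \<Rightarrow> (nat \<Rightarrow> real) \<Rightarrow> (nat \<Rightarrow> real) \<Rightarrow> real mat \<Rightarrow> real" where
  "asym_var n \<pi> f P = lim (\<lambda>N. var_sum n \<pi> P f N / real N)"

definition efficiency_dominates :: "nat \<Rightarrow> (nat \<Rightarrow> real) \<Rightarrow> real mat \<Rightarrow> real mat \<Rightarrow> bool" where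
  "efficiency_dominates n \<pi> P Q \<longleftrightarrow> (\<forall>f. asym_var n \<pi> f P \<le> asym_var n \<pi> f Q)"

definition sorted_eigenvalues :: "real mat \<Rightarrow> real list \<Rightarrow> bool" where
  "sorted_eigenvalues A ls \<longleftrightarrow> length ls = dim_row A \<and> sorted_wrt (\<ge>) ls \<and>
     char_poly A = (\<Prod>a\<leftarrow>ls. [:-a, 1:])"

definition eigen_dominates :: "real mat \<Rightarrow> real mat \<Rightarrow> bool" where
  "eigen_dominates P Q \<longleftrightarrow> (\<exists>lp lq. sorted_eigenvalues P lp \<and> sorted_eigenvalues Q lq \<and>
     (\<forall>i<length lp. lp ! i \<le> lq ! i))"

end

theory Submission
  imports Defs
begin

text \<open>Reversibility makes \<open>P\<close> self-adjoint for the \<open>\<pi>\<close>-weighted inner product, so it has a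
  \<open>\<pi>\<close>-orthonormal eigenbasis \<open>\<phi>\<^sub>0, ..., \<phi>\<^sub>n\<^sub>-\<^sub>1\<close> with decreasing eigenvalues
  \<open>\<lambda>\<^sub>0 = 1 > \<lambda>\<^sub>1 \<ge> ... \<ge> -1\<close> (irreducibility makes \<open>1\<close> simple, with constant eigenvector).
  Expanding the autocovariances of the stationary chain in this basis gives, for \<open>f\<close> with
  mean zero, \<open>v(f,P) = \<Sum>\<^sub>k \<langle>\<phi>\<^sub>k, f\<rangle>\<^sup>2 (1 + \<lambda>\<^sub>k) / (1 - \<lambda>\<^sub>k)\<close>, and
  \<open>(1 + \<lambda>) / (1 - \<lambda>)\<close> is increasing in \<open>\<lambda>\<close>.  For \<open>i > 0\<close> pick, as in the Courant-Fischer
  theorem, a nonzero \<open>f\<close> in the span of \<open>\<phi>\<^sub>0, ..., \<phi>\<^sub>i\<close> orthogonal to the first \<open>i\<close>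
  eigenvectors \<open>\<psi>\<^sub>0, ..., \<psi>\<^sub>i\<^sub>-\<^sub>1\<close> of \<open>Q\<close>; orthogonality to the constant \<open>\<psi>\<^sub>0\<close> makes its
  mean zero.  Then \<open>v(f,P) \<ge> |f|\<^sup>2 (1 + \<lambda>\<^sub>i) / (1 - \<lambda>\<^sub>i)\<close> and
  \<open>v(f,Q) \<le> |f|\<^sup>2 (1 + \<beta>\<^sub>i) / (1 - \<beta>\<^sub>i)\<close>, so \<open>v(f,P) \<le> v(f,Q)\<close> yields \<open>\<lambda>\<^sub>i \<le> \<beta>\<^sub>i\<close>.\<close>

section \<open>Weighted inner product of functions on a finite state space\<close>

definition inner_w :: "nat \<Rightarrow> (nat \<Rightarrow> real) \<Rightarrow> (nat \<Rightarrow> real) \<Rightarrow> (nat \<Rightarrow> real) \<Rightarrow> real" where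
  "inner_w n w u v = (\<Sum>x<n. w x * u x * v x)"

definition orthonormal_w :: "nat \<Rightarrow> (nat \<Rightarrow> real) \<Rightarrow> (nat \<Rightarrow> nat \<Rightarrow> real) \<Rightarrow> nat \<Rightarrow> bool" where
  "orthonormal_w n w \<phi> K \<longleftrightarrow>
     (\<forall>k<K. \<forall>l<K. inner_w n w (\<phi> k) (\<phi> l) = (if k = l then 1 else 0))"

lemma inner_w_commute: "inner_w n w u v = inner_w n w v u"
  unfolding inner_w_def by (simp add: mult_ac)

lemma inner_w_cong:
  "(\<And>x. x < n \<Longrightarrow> u x = u' x) \<Longrightarrow> (\<And>x. x < n \<Longrightarrow> v x = v' x) \<Longrightarrow>
   inner_w n w u v = inner_w n w u' v'"
  unfolding inner_w_def by (rule sum.cong) auto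

lemma inner_w_sum_right:
  "inner_w n w u (\<lambda>x. \<Sum>j\<in>J. c j * v j x) = (\<Sum>j\<in>J. c j * inner_w n w u (v j))"
  unfolding inner_w_def by (simp add: sum_distrib_left sum.swap[of _ J] mult_ac)

lemma inner_w_sum_left:
  "inner_w n w (\<lambda>x. \<Sum>j\<in>J. c j * v j x) u = (\<Sum>j\<in>J. c j * inner_w n w (v j) u)"
  using inner_w_sum_right[of n w u c v J] by (simp add: inner_w_commute)

lemma inner_w_scale_right: "inner_w n w u (\<lambda>x. s * v x) = s * inner_w n w u v"
  unfolding inner_w_def by (simp add: sum_distrib_left mult_ac)

lemma inner_w_scale_left: "inner_w n w (\<lambda>x. s * u x) v = s * inner_w n w u v"
  unfolding inner_w_def by (simp add: sum_distrib_left mult_ac)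

lemma inner_w_const_left:
  assumes "\<forall>x<n. u x = c"
  shows "inner_w n w u v = c * (\<Sum>x<n. w x * v x)"
  using assms unfolding inner_w_def sum_distrib_left by (intro sum.cong) (auto simp: mult_ac)

lemma inner_w_diff_right: "inner_w n w u (\<lambda>x. v x - v' x) = inner_w n w u v - inner_w n w u v'"
  unfolding inner_w_def by (simp add: algebra_simps sum_subtractf)

lemma inner_w_self_pos:
  assumes "\<forall>x<n. w x > 0" "z < n" "u z \<noteq> 0"
  shows "inner_w n w u u > 0"
  unfolding inner_w_def
proof (rule sum_pos2[of _ z])
  show "0 < w z * u z * u z"
    using assms by (metis mult.assoc mult_pos_pos not_real_square_gt_zero)
  show "0 \<le> w x * u x * u x" if "x \<in> {..<n}" for x
    using assms that by (auto intro!: mult_nonneg_nonneg simp: mult.assoc less_imp_le)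
qed (use assms in auto)

lemma inner_w_self_eq_0_iff:
  assumes "\<forall>x<n. w x > 0"
  shows "inner_w n w u u = 0 \<longleftrightarrow> (\<forall>x<n. u x = 0)"
  using inner_w_self_pos[OF assms, of _ u] by (force simp: inner_w_def)

lemma inner_w_normalize:
  assumes "inner_w n w u u > 0"
  obtains s where "inner_w n w (\<lambda>x. s * u x) (\<lambda>x. s * u x) = 1"
proof
  show "inner_w n w (\<lambda>x. 1 / sqrt (inner_w n w u u) * u x) (\<lambda>x. 1 / sqrt (inner_w n w u u) * u x) = 1"
    using assms unfolding inner_w_scale_left inner_w_scale_right
    by (simp add: real_sqrt_mult[symmetric])
qed

lemma inner_w_orthonormal_combination:
  assumes "orthonormal_w n w \<phi> K" "J \<subseteq> {..<K}" "j < K"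
  shows "inner_w n w (\<phi> j) (\<lambda>x. \<Sum>k\<in>J. c k * \<phi> k x) = (if j \<in> J then c j else 0)"
proof -
  have "inner_w n w (\<phi> j) (\<lambda>x. \<Sum>k\<in>J. c k * \<phi> k x) = (\<Sum>k\<in>J. c k * inner_w n w (\<phi> j) (\<phi> k))"
    by (rule inner_w_sum_right)
  also have "\<dots> = (\<Sum>k\<in>J. if j = k then c k else 0)"
  proof (rule sum.cong[OF refl])
    fix k assume "k \<in> J"
    then have "k < K" using assms(2) by auto
    then show "c k * inner_w n w (\<phi> j) (\<phi> k) = (if j = k then c k else 0)"
      using assms(1,3) unfolding orthonormal_w_def by simp
  qed
  also have "\<dots> = (if j \<in> J then c j else 0)"
    using finite_subset[OF assms(2) finite_lessThan] by (rule sum.delta')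
  finally show ?thesis .
qed

lemma orthonormal_w_combination_nonzero:
  assumes "orthonormal_w n w \<phi> K" "J \<subseteq> {..<K}" "j \<in> J" "c j \<noteq> 0"
  shows "\<exists>x<n. (\<Sum>k\<in>J. c k * \<phi> k x) \<noteq> 0"
proof (rule ccontr)
  assume "\<not> ?thesis"
  then have "inner_w n w (\<phi> j) (\<lambda>x. \<Sum>k\<in>J. c k * \<phi> k x) = 0" by (simp add: inner_w_def)
  then show False using inner_w_orthonormal_combination[OF assms(1,2)] assms(2-4) by auto
qed

lemma orthonormal_w_snoc:
  assumes "orthonormal_w n w \<phi> K" "inner_w n w u u = 1" "\<forall>k<K. inner_w n w (\<phi> k) u = 0"
  shows "orthonormal_w n w (\<phi>(K := u)) (Suc K)"
  unfolding orthonormal_w_def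
proof (intro allI impI)
  fix k l assume "k < Suc K" "l < Suc K"
  then consider "k = K" "l = K" | "k = K" "l < K" | "k < K" "l = K" | "k < K" "l < K"
    by linarith
  then show "inner_w n w ((\<phi>(K := u)) k) ((\<phi>(K := u)) l) = (if k = l then 1 else 0)"
  proof cases
    case 1 then show ?thesis using assms(2) by simp
  next
    case 2 then show ?thesis using assms(3) by (simp add: inner_w_commute)
  next
    case 3 then show ?thesis using assms(3) by simp
  next
    case 4 then show ?thesis using assms(1) unfolding orthonormal_w_def by simp
  qed
qed

text \<open>The induction step eliminates the last coordinate using a function that does not
  vanish there.\<close>

lemma exists_nontrivial_null_combination:
  fixes v :: "nat \<Rightarrow> nat \<Rightarrow> real"
  assumes "finite J" "n < card J"
  shows "\<exists>c. (\<exists>j\<in>J. c j \<noteq> 0) \<and> (\<forall>x<n. (\<Sum>j\<in>J. c j * v j x) = 0)"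
  using assms
proof (induction n arbitrary: J v)
  case 0
  then obtain j where "j \<in> J" by fastforce
  then show ?case by (intro exI[of _ "\<lambda>_. 1"]) auto
next
  case (Suc n)
  show ?case
  proof (cases "\<forall>j\<in>J. v j n = 0")
    case True
    obtain c where c: "\<exists>j\<in>J. c j \<noteq> 0" "\<forall>x<n. (\<Sum>j\<in>J. c j * v j x) = 0"
      using Suc.IH[of J v] Suc.prems by auto
    then have "\<forall>x<Suc n. (\<Sum>j\<in>J. c j * v j x) = 0"
      using True by (auto simp: less_Suc_eq)
    with c(1) show ?thesis by blast
  next
    case False
    then obtain j0 where j0: "j0 \<in> J" "v j0 n \<noteq> 0" by auto
    define v' where "v' = (\<lambda>j x. v j x - v j n / v j0 n * v j0 x)"
    have "finite (J - {j0})" "n < card (J - {j0})" using Suc.prems j0 by auto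
    from Suc.IH[OF this, of v'] obtain c' where
      c': "\<exists>j\<in>J - {j0}. c' j \<noteq> 0" "\<forall>x<n. (\<Sum>j\<in>J - {j0}. c' j * v' j x) = 0" by blast
    define c where "c = c'(j0 := - (\<Sum>j\<in>J - {j0}. c' j * v j n) / v j0 n)"
    have eq: "(\<Sum>j\<in>J. c j * v j x) = (\<Sum>j\<in>J - {j0}. c' j * v' j x)" for x
    proof -
      have "(\<Sum>j\<in>J. c j * v j x) = c j0 * v j0 x + (\<Sum>j\<in>J - {j0}. c j * v j x)"
        using j0 Suc.prems(1) by (simp add: sum.remove)
      also have "(\<Sum>j\<in>J - {j0}. c j * v j x) = (\<Sum>j\<in>J - {j0}. c' j * v j x)"
        by (rule sum.cong) (auto simp: c_def)
      also have "(\<Sum>j\<in>J - {j0}. c' j * v' j x) =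
          (\<Sum>j\<in>J - {j0}. c' j * v j x) - (\<Sum>j\<in>J - {j0}. c' j * v j n) / v j0 n * v j0 x"
        unfolding v'_def
        by (simp add: right_diff_distrib sum_subtractf sum_distrib_left sum_distrib_right
            sum_divide_distrib mult_ac)
      ultimately show ?thesis by (simp add: c_def)
    qed
    have "\<forall>x<Suc n. (\<Sum>j\<in>J. c j * v j x) = 0"
      using c'(2) j0(2) by (auto simp: eq less_Suc_eq v'_def)
    moreover have "\<exists>j\<in>J. c j \<noteq> 0" using c'(1) by (auto simp: c_def)
    ultimately show ?thesis by blast
  qed
qed

lemma orthonormal_w_card_le:
  assumes "orthonormal_w n w \<phi> K"
  shows "K \<le> n"
proof (rule ccontr)
  assume "\<not> K \<le> n"
  then obtain c where c: "\<exists>j<K. c j \<noteq> 0" "\<forall>x<n. (\<Sum>j<K. c j * \<phi> j x) = 0"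
    using exists_nontrivial_null_combination[of "{..<K}" n \<phi>] by auto
  have "c j = 0" if "j < K" for j
  proof -
    have "c j = inner_w n w (\<phi> j) (\<lambda>x. \<Sum>k<K. c k * \<phi> k x)"
      using inner_w_orthonormal_combination[OF assms _ that] that by simp
    also have "\<dots> = inner_w n w (\<phi> j) (\<lambda>_. 0)"
      using c(2) by (intro inner_w_cong) auto
    finally show ?thesis by (simp add: inner_w_def)
  qed
  with c(1) show False by blast
qed

lemma exists_unit_orthogonal:
  assumes w: "\<forall>x<n. w x > 0" and "K < n"
  shows "\<exists>u. inner_w n w u u = 1 \<and> (\<forall>k<K. inner_w n w (\<phi> k) u = 0)"
proof -
  obtain c where c: "\<exists>z<n. c z \<noteq> 0" "\<forall>k<K. (\<Sum>z<n. c z * (w z * \<phi> k z)) = 0"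
    using exists_nontrivial_null_combination[of "{..<n}" K "\<lambda>z k. w z * \<phi> k z"] assms by auto
  have orth: "inner_w n w (\<phi> k) c = 0" if "k < K" for k
    using c(2) that unfolding inner_w_def by (simp add: mult_ac)
  have "inner_w n w c c > 0" using c(1) inner_w_self_pos[OF w] by blast
  then obtain s where "inner_w n w (\<lambda>x. s * c x) (\<lambda>x. s * c x) = 1" by (rule inner_w_normalize)
  with orth show ?thesis by (intro exI[of _ "\<lambda>x. s * c x"]) (simp add: inner_w_scale_right)
qed

lemma orthonormal_w_extend:
  assumes w: "\<forall>x<n. w x > 0" and "orthonormal_w n w \<phi> K" "K \<le> n"
  shows "\<exists>\<psi>. orthonormal_w n w \<psi> n \<and> (\<forall>k<K. \<psi> k = \<phi> k)"
  using assms(2,3)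
proof (induction "n - K" arbitrary: K \<phi>)
  case 0
  then show ?case by auto
next
  case (Suc m)
  then obtain u where u: "inner_w n w u u = 1" "\<forall>k<K. inner_w n w (\<phi> k) u = 0"
    using exists_unit_orthogonal[OF w] by (metis diff_is_0_eq not_le nat.distinct(1))
  have "m = n - Suc K" "Suc K \<le> n" using Suc.hyps(2) by arith+
  from Suc.hyps(1)[OF this(1) orthonormal_w_snoc[OF Suc.prems(1) u] this(2)]
  show ?case by auto
qed

lemma orthonormal_w_expansion:
  assumes w: "\<forall>x<n. w x > 0" and \<psi>: "orthonormal_w n w \<psi> n" and "x < n"
  shows "u x = (\<Sum>j<n. inner_w n w (\<psi> j) u * \<psi> j x)"
proof -
  define r where "r = (\<lambda>x. u x - (\<Sum>j<n. inner_w n w (\<psi> j) u * \<psi> j x))"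
  have r_orth: "inner_w n w (\<psi> l) r = 0" if "l < n" for l
    using inner_w_orthonormal_combination[OF \<psi> _ that, of "{..<n}"] that
    by (simp add: r_def inner_w_diff_right)
  have "r x = 0"
  proof (rule ccontr)
    assume "r x \<noteq> 0"
    then have "inner_w n w r r > 0" using inner_w_self_pos[OF w \<open>x < n\<close>] by blast
    then obtain s where "inner_w n w (\<lambda>x. s * r x) (\<lambda>x. s * r x) = 1" by (rule inner_w_normalize)
    then have "orthonormal_w n w (\<psi>(n := \<lambda>x. s * r x)) (Suc n)"
      using r_orth by (intro orthonormal_w_snoc[OF \<psi>]) (simp_all add: inner_w_scale_right)
    then show False using orthonormal_w_card_le by fastforce
  qed
  then show ?thesis unfolding r_def by simp
qed

lemma orthonormal_w_coeffs_eq: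
  assumes w: "\<forall>x<n. w x > 0" and \<psi>: "orthonormal_w n w \<psi> n"
    and "\<forall>j<n. inner_w n w (\<psi> j) u = inner_w n w (\<psi> j) v"
  shows "\<forall>x<n. u x = v x"
proof (intro allI impI)
  fix x assume "x < n"
  have "u x = (\<Sum>j<n. inner_w n w (\<psi> j) u * \<psi> j x)" by (rule orthonormal_w_expansion[OF w \<psi> \<open>x < n\<close>])
  also have "\<dots> = (\<Sum>j<n. inner_w n w (\<psi> j) v * \<psi> j x)" using assms(3) by simp
  also have "\<dots> = v x" by (rule orthonormal_w_expansion[OF w \<psi> \<open>x < n\<close>, symmetric])
  finally show "u x = v x" .
qed

lemma orthonormal_w_parseval:
  assumes "\<forall>x<n. w x > 0" "orthonormal_w n w \<psi> n"
  shows "inner_w n w u u = (\<Sum>k<n. (inner_w n w (\<psi> k) u)\<^sup>2)"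
proof -
  have "inner_w n w u u = inner_w n w (\<lambda>x. \<Sum>k<n. inner_w n w (\<psi> k) u * \<psi> k x) u"
    using orthonormal_w_expansion[OF assms] by (intro inner_w_cong) auto
  then show ?thesis by (simp add: inner_w_sum_left inner_w_commute power2_eq_square)
qed

section \<open>Spectral theorem for matrices self-adjoint with respect to a weight\<close>

definition mat_act :: "nat \<Rightarrow> real mat \<Rightarrow> (nat \<Rightarrow> real) \<Rightarrow> nat \<Rightarrow> real" where
  "mat_act n A u = (\<lambda>x. \<Sum>y<n. A $$ (x,y) * u y)"

lemma mat_act_cong: "(\<And>y. y < n \<Longrightarrow> u y = v y) \<Longrightarrow> mat_act n A u x = mat_act n A v x"
  unfolding mat_act_def by (rule sum.cong) auto

lemma mat_act_scale: "mat_act n A (\<lambda>x. s * u x) x = s * mat_act n A u x"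
  unfolding mat_act_def by (simp add: sum_distrib_left mult_ac)

lemma mat_act_sum: "mat_act n A (\<lambda>x. \<Sum>b\<in>B. c b * v b x) = (\<lambda>x. \<Sum>b\<in>B. c b * mat_act n A (v b) x)"
  unfolding mat_act_def by (simp add: sum_distrib_left sum.swap[of _ B] mult_ac)

lemma inner_w_mat_act:
  assumes "reversible n w A"
  shows "inner_w n w (mat_act n A u) v = inner_w n w u (mat_act n A v)"
proof -
  have "inner_w n w (mat_act n A u) v = (\<Sum>x<n. \<Sum>y<n. (w x * A $$ (x,y)) * u y * v x)"
    unfolding inner_w_def mat_act_def by (simp add: sum_distrib_left sum_distrib_right mult_ac)
  also have "\<dots> = (\<Sum>x<n. \<Sum>y<n. (w y * A $$ (y,x)) * u y * v x)"
    using assms unfolding reversible_def by (intro sum.cong refl) auto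
  also have "\<dots> = inner_w n w u (mat_act n A v)"
    unfolding inner_w_def mat_act_def
    by (subst sum.swap) (simp add: sum_distrib_left sum_distrib_right mult_ac)
  finally show ?thesis .
qed

lemma inner_w_mat_act_eigenvector:
  assumes "reversible n w A" "\<forall>x<n. mat_act n A \<phi> x = lam * \<phi> x"
  shows "inner_w n w \<phi> (mat_act n A u) = lam * inner_w n w \<phi> u"
proof -
  have "inner_w n w \<phi> (mat_act n A u) = inner_w n w (\<lambda>x. lam * \<phi> x) u"
    unfolding inner_w_mat_act[OF assms(1), symmetric] using assms(2) by (intro inner_w_cong) auto
  then show ?thesis by (simp add: inner_w_scale_left)
qed

definition orthonormal_eigenvectors ::
    "nat \<Rightarrow> (nat \<Rightarrow> real) \<Rightarrow> real mat \<Rightarrow> (nat \<Rightarrow> nat \<Rightarrow> real) \<Rightarrow> (nat \<Rightarrow> real) \<Rightarrow> nat \<Rightarrow> bool" where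
  "orthonormal_eigenvectors n w A \<phi> d K \<longleftrightarrow>
     orthonormal_w n w \<phi> K \<and> (\<forall>k<K. \<forall>x<n. mat_act n A (\<phi> k) x = d k * \<phi> k x)"

definition decreasing_eigenbasis ::
    "nat \<Rightarrow> (nat \<Rightarrow> real) \<Rightarrow> real mat \<Rightarrow> (nat \<Rightarrow> nat \<Rightarrow> real) \<Rightarrow> (nat \<Rightarrow> real) \<Rightarrow> bool" where
  "decreasing_eigenbasis n w A \<phi> d \<longleftrightarrow>
     orthonormal_eigenvectors n w A \<phi> d n \<and> (\<forall>i j. i \<le> j \<longrightarrow> j < n \<longrightarrow> d j \<le> d i)"

lemma exists_complex_eigenvector:
  fixes C :: "nat \<Rightarrow> nat \<Rightarrow> real"
  assumes "m > 0"
  shows "\<exists>(z :: complex) v. (\<exists>a<m. v a \<noteq> 0) \<and> (\<forall>a<m. (\<Sum>b<m. of_real (C a b) * v b) = z * v a)"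
proof -
  define Cc :: "complex mat" where "Cc = mat m m (\<lambda>(a,b). of_real (C a b))"
  have Cc: "Cc \<in> carrier_mat m m" unfolding Cc_def by simp
  obtain zs where zs: "char_poly Cc = (\<Prod>a\<leftarrow>zs. [:-a,1:])" "length zs = m"
    using char_poly_factorized[OF Cc] by blast
  have "zs \<noteq> []" using zs(2) assms by auto
  then obtain z where "z \<in> set zs" by (cases zs) auto
  then have "poly (char_poly Cc) z = 0"
    unfolding zs(1) poly_prod_list prod_list_zero_iff by force
  then obtain v where "eigenvector Cc v z"
    using eigenvalue_root_char_poly[OF Cc] unfolding eigenvalue_def by blast
  then have v: "v \<in> carrier_vec m" "v \<noteq> 0\<^sub>v m" "Cc *\<^sub>v v = z \<cdot>\<^sub>v v"
    unfolding eigenvector_def using Cc by auto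
  have "(\<Sum>b<m. of_real (C a b) * v $ b) = z * v $ a" if a: "a < m" for a
  proof -
    have "(Cc *\<^sub>v v) $ a = (z \<cdot>\<^sub>v v) $ a" using v(3) by simp
    then show ?thesis using a v(1) Cc
      by (simp add: Cc_def scalar_prod_def atLeast0LessThan)
  qed
  moreover have "\<exists>a<m. v $ a \<noteq> 0"
    using v(1,2) by (metis carrier_vecD eq_vecI index_zero_vec(1) index_zero_vec(2))
  ultimately show ?thesis by blast
qed

text \<open>Symmetry gives \<open>\<langle>Y, C X\<rangle> = \<langle>X, C Y\<rangle>\<close>, which forces
  \<open>\<beta> (|X|\<^sup>2 + |Y|\<^sup>2) = 0\<close>.\<close>

lemma symmetric_rotation_trivial:
  fixes C :: "nat \<Rightarrow> nat \<Rightarrow> real"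
  assumes sym: "\<forall>a<m. \<forall>b<m. C a b = C b a"
    and X: "\<forall>a<m. (\<Sum>b<m. C a b * X b) = \<alpha> * X a - \<beta> * Y a"
    and Y: "\<forall>a<m. (\<Sum>b<m. C a b * Y b) = \<beta> * X a + \<alpha> * Y a"
    and nz: "a0 < m" "X a0 \<noteq> 0 \<or> Y a0 \<noteq> 0"
  shows "\<beta> = 0"
proof -
  have "(\<Sum>a<m. Y a * (\<Sum>b<m. C a b * X b)) = (\<Sum>b<m. \<Sum>a<m. Y a * C a b * X b)"
    by (subst sum.swap) (simp add: sum_distrib_left mult_ac)
  also have "\<dots> = (\<Sum>a<m. X a * (\<Sum>b<m. C a b * Y b))"
    using sym by (simp add: sum_distrib_left mult_ac)
  finally have "(\<Sum>a<m. Y a * (\<alpha> * X a - \<beta> * Y a)) = (\<Sum>a<m. X a * (\<beta> * X a + \<alpha> * Y a))"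
    using X Y by simp
  then have "\<beta> * (\<Sum>a<m. X a * X a + Y a * Y a) = 0"
    by (simp add: algebra_simps sum.distrib sum_subtractf sum_distrib_left)
  moreover have "0 < (\<Sum>a<m. X a * X a + Y a * Y a)"
  proof (rule sum_pos2[of _ a0])
    show "0 < X a0 * X a0 + Y a0 * Y a0"
      using nz(2) by (metis add_pos_nonneg add_nonneg_pos not_real_square_gt_zero zero_le_square)
  qed (use nz(1) in auto)
  ultimately show ?thesis by simp
qed

lemma symmetric_real_eigenvector:
  fixes C :: "nat \<Rightarrow> nat \<Rightarrow> real"
  assumes "m > 0" and sym: "\<forall>a<m. \<forall>b<m. C a b = C b a"
  shows "\<exists>lam y. (\<exists>a<m. y a \<noteq> 0) \<and> (\<forall>a<m. (\<Sum>b<m. C a b * y b) = lam * y a)"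
proof -
  obtain z :: complex and v where v: "\<exists>a<m. v a \<noteq> 0" "\<forall>a<m. (\<Sum>b<m. of_real (C a b) * v b) = z * v a"
    using exists_complex_eigenvector[OF assms(1)] by blast
  define X where "X = (\<lambda>b. Re (v b))"
  define Y where "Y = (\<lambda>b. Im (v b))"
  have X: "\<forall>a<m. (\<Sum>b<m. C a b * X b) = Re z * X a - Im z * Y a"
  proof (intro allI impI)
    fix a assume "a < m"
    from arg_cong[OF v(2)[rule_format, OF this], of Re]
    show "(\<Sum>b<m. C a b * X b) = Re z * X a - Im z * Y a" by (simp add: Re_sum X_def Y_def)
  qed
  have Y: "\<forall>a<m. (\<Sum>b<m. C a b * Y b) = Im z * X a + Re z * Y a"
  proof (intro allI impI)
    fix a assume "a < m"
    from arg_cong[OF v(2)[rule_format, OF this], of Im]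
    show "(\<Sum>b<m. C a b * Y b) = Im z * X a + Re z * Y a" by (simp add: Im_sum X_def Y_def)
  qed
  obtain a0 where a0: "a0 < m" "v a0 \<noteq> 0" using v(1) by blast
  then have XY: "X a0 \<noteq> 0 \<or> Y a0 \<noteq> 0" unfolding X_def Y_def using complex_eqI by force
  have "Im z = 0" by (rule symmetric_rotation_trivial[OF sym X Y a0(1) XY])
  show ?thesis
  proof (cases "X a0 = 0")
    case False
    then show ?thesis using X \<open>Im z = 0\<close> a0(1) by (intro exI[of _ "Re z"] exI[of _ X]) auto
  next
    case True
    then show ?thesis using Y XY \<open>Im z = 0\<close> a0(1) by (intro exI[of _ "Re z"] exI[of _ Y]) auto
  qed
qed

lemma self_adjoint_compression_real_eigenvector:
  fixes m :: nat and \<chi> :: "nat \<Rightarrow> nat \<Rightarrow> real"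
  assumes A: "reversible n w A" and "0 < m"
  shows "\<exists>lam y. (\<exists>a<m. y a \<noteq> 0) \<and>
    (\<forall>a<m. (\<Sum>b<m. inner_w n w (\<chi> a) (mat_act n A (\<chi> b)) * y b) = lam * y a)"
proof (rule symmetric_real_eigenvector[OF \<open>0 < m\<close>], intro allI impI)
  fix a b
  have "inner_w n w (\<chi> a) (mat_act n A (\<chi> b)) = inner_w n w (mat_act n A (\<chi> a)) (\<chi> b)"
    by (rule inner_w_mat_act[OF A, symmetric])
  also have "\<dots> = inner_w n w (\<chi> b) (mat_act n A (\<chi> a))" by (rule inner_w_commute)
  finally show "inner_w n w (\<chi> a) (mat_act n A (\<chi> b)) = inner_w n w (\<chi> b) (mat_act n A (\<chi> a))" .
qed

lemma sum_atLeastLessThan_shift_0: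
  fixes K n :: nat
  assumes "K \<le> n"
  shows "(\<Sum>k\<in>{K..<n}. g (k - K)) = (\<Sum>b<n - K. g b)"
proof -
  have "{K..<n} = {0 + K..<(n - K) + K}" using assms by simp
  then show ?thesis by (simp only: sum.shift_bounds_nat_ivl) (simp add: lessThan_atLeast0)
qed

text \<open>In an orthonormal basis whose first \<open>K\<close> vectors are eigenvectors, the span of the
  remaining ones is invariant, so an eigenvector of the compressed matrix is an eigenvector.\<close>

lemma compression_eigenvector:
  assumes w: "\<forall>x<n. w x > 0" and A: "reversible n w A" and \<psi>: "orthonormal_w n w \<psi> n"
    and ev: "\<forall>j<K. \<forall>x<n. mat_act n A (\<psi> j) x = d j * \<psi> j x" and "K \<le> n"
    and y: "\<forall>a<n - K. (\<Sum>b<n - K. inner_w n w (\<psi> (K + a)) (mat_act n A (\<psi> (K + b))) * y b) = lam * y a"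
  defines "u \<equiv> \<lambda>x. \<Sum>k\<in>{K..<n}. y (k - K) * \<psi> k x"
  shows "\<forall>x<n. mat_act n A u x = lam * u x"
proof -
  have coeff: "inner_w n w (\<psi> j) u = (if K \<le> j then y (j - K) else 0)" if "j < n" for j
    using inner_w_orthonormal_combination[OF \<psi> _ that, of "{K..<n}" "\<lambda>k. y (k - K)"] that
    unfolding u_def by (simp add: subset_eq)
  have "inner_w n w (\<psi> j) (mat_act n A u) = lam * inner_w n w (\<psi> j) u" if "j < n" for j
  proof (cases "K \<le> j")
    case True
    define a where "a = j - K"
    have a: "j = K + a" "a < n - K" using True \<open>j < n\<close> unfolding a_def by auto
    have "inner_w n w (\<psi> j) (mat_act n A u) =
        (\<Sum>k\<in>{K..<n}. y (k - K) * inner_w n w (\<psi> (K + a)) (mat_act n A (\<psi> k)))"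
      unfolding u_def mat_act_sum inner_w_sum_right a(1) by simp
    also have "\<dots> = (\<Sum>b<n - K. inner_w n w (\<psi> (K + a)) (mat_act n A (\<psi> (K + b))) * y b)"
      using sum_atLeastLessThan_shift_0[OF \<open>K \<le> n\<close>,
          of "\<lambda>b. y b * inner_w n w (\<psi> (K + a)) (mat_act n A (\<psi> (K + b)))"]
      by (simp add: mult.commute)
    also have "\<dots> = lam * inner_w n w (\<psi> j) u" using y a coeff[OF that] by simp
    finally show ?thesis .
  next
    case False
    then have "inner_w n w (\<psi> j) (mat_act n A u) = d j * inner_w n w (\<psi> j) u"
      using ev by (intro inner_w_mat_act_eigenvector[OF A]) auto
    then show ?thesis using coeff[OF that] False by simp
  qed
  then have "\<forall>j<n. inner_w n w (\<psi> j) (mat_act n A u) = inner_w n w (\<psi> j) (\<lambda>x. lam * u x)"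
    by (simp add: inner_w_scale_right)
  then show ?thesis by (rule orthonormal_w_coeffs_eq[OF w \<psi>])
qed

lemma exists_eigenvector_orthogonal:
  assumes w: "\<forall>x<n. w x > 0" and A: "reversible n w A"
    and \<phi>: "orthonormal_eigenvectors n w A \<phi> d K" and "K < n"
  shows "\<exists>u lam. (\<exists>x<n. u x \<noteq> 0) \<and> (\<forall>k<K. inner_w n w (\<phi> k) u = 0) \<and>
    (\<forall>x<n. mat_act n A u x = lam * u x)"
proof -
  obtain \<psi> where \<psi>: "orthonormal_w n w \<psi> n" "\<forall>k<K. \<psi> k = \<phi> k"
    using orthonormal_w_extend[OF w] \<phi> \<open>K < n\<close> unfolding orthonormal_eigenvectors_def by force
  have ev: "\<forall>j<K. \<forall>x<n. mat_act n A (\<psi> j) x = d j * \<psi> j x"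
    using \<phi> \<psi>(2) unfolding orthonormal_eigenvectors_def by simp
  obtain lam y where y: "\<exists>a<n - K. y a \<noteq> 0"
    "\<forall>a<n - K. (\<Sum>b<n - K. inner_w n w (\<psi> (K + a)) (mat_act n A (\<psi> (K + b))) * y b) = lam * y a"
    using self_adjoint_compression_real_eigenvector[OF A, of "n - K" "\<lambda>a. \<psi> (K + a)"] \<open>K < n\<close>
    by auto
  define u where "u = (\<lambda>x. \<Sum>k\<in>{K..<n}. y (k - K) * \<psi> k x)"
  have "\<forall>x<n. mat_act n A u x = lam * u x"
    unfolding u_def using \<open>K < n\<close> by (intro compression_eigenvector[OF w A \<psi>(1) ev _ y(2)]) simp
  moreover have "\<exists>x<n. u x \<noteq> 0"
  proof -
    obtain a where "a < n - K" "y a \<noteq> 0" using y(1) by blast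
    then have "{K..<n} \<subseteq> {..<n}" "K + a \<in> {K..<n}" "y (K + a - K) \<noteq> 0" by auto
    from orthonormal_w_combination_nonzero[where c = "\<lambda>k. y (k - K)", OF \<psi>(1) this]
    show ?thesis unfolding u_def .
  qed
  moreover have "\<forall>k<K. inner_w n w (\<phi> k) u = 0"
  proof (intro allI impI)
    fix k assume "k < K"
    have "{K..<n} \<subseteq> {..<n}" "k < n" using \<open>k < K\<close> \<open>K < n\<close> by auto
    from inner_w_orthonormal_combination[OF \<psi>(1) this, of "\<lambda>k. y (k - K)"]
    have "inner_w n w (\<psi> k) u = 0" using \<open>k < K\<close> unfolding u_def by simp
    then show "inner_w n w (\<phi> k) u = 0" using \<psi>(2) \<open>k < K\<close> by simp
  qed
  ultimately show ?thesis by blast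
qed

lemma orthonormal_eigenvectors_exist:
  assumes w: "\<forall>x<n. w x > 0" and A: "reversible n w A" and "K \<le> n"
  shows "\<exists>\<phi> d. orthonormal_eigenvectors n w A \<phi> d K"
  using \<open>K \<le> n\<close>
proof (induction K)
  case 0
  show ?case by (simp add: orthonormal_eigenvectors_def orthonormal_w_def)
next
  case (Suc K)
  then obtain \<phi> d where \<phi>: "orthonormal_eigenvectors n w A \<phi> d K" by auto
  obtain u lam where u: "\<exists>x<n. u x \<noteq> 0" "\<forall>k<K. inner_w n w (\<phi> k) u = 0"
    "\<forall>x<n. mat_act n A u x = lam * u x"
    using exists_eigenvector_orthogonal[OF w A \<phi>] Suc.prems by auto
  have "inner_w n w u u > 0" using u(1) inner_w_self_pos[OF w] by blast
  then obtain s where s: "inner_w n w (\<lambda>x. s * u x) (\<lambda>x. s * u x) = 1" by (rule inner_w_normalize)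
  have "orthonormal_w n w (\<phi>(K := \<lambda>x. s * u x)) (Suc K)"
    using \<phi> s u(2) by (intro orthonormal_w_snoc)
      (simp_all add: orthonormal_eigenvectors_def inner_w_scale_right)
  moreover have "\<forall>x<n. mat_act n A (\<lambda>x. s * u x) x = lam * (s * u x)"
    using u(3) by (simp add: mat_act_scale)
  ultimately have "orthonormal_eigenvectors n w A (\<phi>(K := \<lambda>x. s * u x)) (d(K := lam)) (Suc K)"
    using \<phi> unfolding orthonormal_eigenvectors_def by (simp add: less_Suc_eq)
  then show ?case by blast
qed

lemma decreasing_eigenbasis_exists:
  assumes w: "\<forall>x<n. w x > 0" and A: "reversible n w A"
  shows "\<exists>\<phi> d. decreasing_eigenbasis n w A \<phi> d"
proof -
  obtain \<phi> d where \<phi>: "orthonormal_eigenvectors n w A \<phi> d n"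
    using orthonormal_eigenvectors_exist[OF w A le_refl] by blast
  define ds where "ds = map d [0..<n]"
  have "mset (rev (sort ds)) = mset ds" by simp
  then obtain p where p: "p permutes {..<length ds}" "permute_list p ds = rev (sort ds)"
    using mset_eq_permutation by blast
  have pn: "p k < n" if "k < n" for k
    using p(1) that unfolding ds_def by (metis lessThan_iff length_map diff_zero length_upt permutes_in_image)
  have p_inj: "p k = p l \<longleftrightarrow> k = l" for k l
    using p(1) by (meson permutes_inj injD)
  have "d (p k) = rev (sort ds) ! k" if "k < n" for k
  proof -
    have "rev (sort ds) ! k = ds ! p k"
      using p that unfolding ds_def by (metis permute_list_nth length_map diff_zero length_upt)
    then show ?thesis using pn[OF that] by (simp add: ds_def)
  qed
  moreover have "sorted_wrt (\<ge>) (rev (sort ds))" by (simp add: sorted_wrt_rev)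
  ultimately have "d (p j) \<le> d (p i)" if "i \<le> j" "j < n" for i j
    using that unfolding ds_def
    by (cases "i = j") (auto simp: sorted_wrt_iff_nth_less)
  moreover have "orthonormal_eigenvectors n w A (\<lambda>k. \<phi> (p k)) (\<lambda>k. d (p k)) n"
    using \<phi> pn p_inj unfolding orthonormal_eigenvectors_def orthonormal_w_def by auto
  ultimately show ?thesis unfolding decreasing_eigenbasis_def by blast
qed

lemma char_poly_eq_prod_eigenvalues:
  assumes A: "A \<in> carrier_mat n n" and \<phi>: "orthonormal_eigenvectors n w A \<phi> d n"
  shows "char_poly A = (\<Prod>a\<leftarrow>map d [0..<n]. [:-a, 1:])"
proof -
  define U :: "real mat" where "U = mat n n (\<lambda>(x,k). \<phi> k x)"
  define V :: "real mat" where "V = mat n n (\<lambda>(k,y). w y * \<phi> k y)"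
  define D :: "real mat" where "D = mat n n (\<lambda>(k,l). if k = l then d k else 0)"
  have U: "U \<in> carrier_mat n n" and V: "V \<in> carrier_mat n n" and D: "D \<in> carrier_mat n n"
    unfolding U_def V_def D_def by auto
  have VU: "V * U = 1\<^sub>m n"
  proof (rule eq_matI)
    fix i j assume "i < dim_row (1\<^sub>m n :: real mat)" "j < dim_col (1\<^sub>m n :: real mat)"
    then show "(V * U) $$ (i,j) = (1\<^sub>m n :: real mat) $$ (i,j)"
      using \<phi> unfolding V_def U_def orthonormal_eigenvectors_def orthonormal_w_def inner_w_def
      by (simp add: scalar_prod_def atLeast0LessThan mult_ac)
  qed (use V U in auto)
  have UV: "U * V = 1\<^sub>m n" by (rule mat_mult_left_right_inverse[OF V U VU])
  have AU: "A * U = U * D"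
  proof (rule eq_matI)
    fix i j assume "i < dim_row (U * D)" "j < dim_col (U * D)"
    then have ij: "i < n" "j < n" using U D by auto
    have "(A * U) $$ (i,j) = mat_act n A (\<phi> j) i"
      using ij A unfolding U_def mat_act_def by (simp add: scalar_prod_def atLeast0LessThan)
    also have "\<dots> = (\<Sum>l<n. \<phi> l i * (if l = j then d l else 0))"
      using \<phi> ij unfolding orthonormal_eigenvectors_def by (simp add: if_distrib cong: if_cong)
    also have "\<dots> = (U * D) $$ (i,j)"
      using ij unfolding U_def D_def by (simp add: scalar_prod_def atLeast0LessThan)
    finally show "(A * U) $$ (i,j) = (U * D) $$ (i,j)" .
  qed (use A U D in auto)
  have "A = U * D * V"
    using A U V UV by (metis AU assoc_mult_mat right_mult_one_mat mult_carrier_mat)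
  then have "similar_mat A D"
    unfolding similar_mat_def similar_mat_wit_def Let_def using A U V D UV VU by blast
  then have "char_poly A = char_poly D" by (rule char_poly_similar)
  also have "\<dots> = (\<Prod>a\<leftarrow>diag_mat D. [:-a, 1:])"
    by (rule char_poly_upper_triangular[OF D]) (auto simp: upper_triangular_def D_def)
  also have "diag_mat D = map d [0..<n]" unfolding diag_mat_def D_def by auto
  finally show ?thesis .
qed

lemma sorted_eigenvalues_of_decreasing_eigenbasis:
  assumes "A \<in> carrier_mat n n" "decreasing_eigenbasis n w A \<phi> d"
  shows "sorted_eigenvalues A (map d [0..<n])"
  using assms char_poly_eq_prod_eigenvalues[OF assms(1)]
  unfolding sorted_eigenvalues_def decreasing_eigenbasis_def
  by (auto simp: sorted_wrt_iff_nth_less)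

section \<open>Second moments of the stationary chain\<close>

lemma mat_act_const:
  assumes "transition_matrix n P" "x < n"
  shows "mat_act n P (\<lambda>_. c) x = c"
  using assms unfolding transition_matrix_def mat_act_def by (simp add: sum_distrib_right[symmetric])

lemma reversible_stationary:
  assumes "transition_matrix n P" "reversible n \<pi> P"
  shows "(\<Sum>x<n. \<pi> x * mat_act n P u x) = (\<Sum>x<n. \<pi> x * u x)"
proof -
  have "(\<Sum>x<n. \<pi> x * mat_act n P u x) = inner_w n \<pi> (\<lambda>_. 1) (mat_act n P u)"
    by (simp add: inner_w_def)
  also have "\<dots> = inner_w n \<pi> (mat_act n P (\<lambda>_. 1)) u"
    by (rule inner_w_mat_act[OF assms(2), symmetric])
  also have "\<dots> = inner_w n \<pi> (\<lambda>_. 1) u"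
    using mat_act_const[OF assms(1)] by (intro inner_w_cong) auto
  finally show ?thesis by (simp add: inner_w_def)
qed

lemma sum_PiE_lessThan_Suc:
  fixes F :: "(nat \<Rightarrow> 'b) \<Rightarrow> 'a :: comm_monoid_add"
  assumes "finite B"
  shows "(\<Sum>p\<in>PiE {..<Suc N} (\<lambda>_. B). F p) = (\<Sum>p\<in>PiE {..<N} (\<lambda>_. B). \<Sum>y\<in>B. F (p(N := y)))"
proof -
  have "(\<Sum>p\<in>PiE {..<Suc N} (\<lambda>_. B). F p) =
      (\<Sum>p\<in>(\<lambda>(y, g). g(N := y)) ` (B \<times> PiE {..<N} (\<lambda>_. B)). F p)"
    by (simp add: lessThan_Suc PiE_insert_eq)
  also have "\<dots> = (\<Sum>yg\<in>B \<times> PiE {..<N} (\<lambda>_. B). F ((\<lambda>(y, g). g(N := y)) yg))"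
    by (rule sum.reindex[OF inj_combinator, unfolded comp_def]) simp
  also have "\<dots> = (\<Sum>y\<in>B. \<Sum>p\<in>PiE {..<N} (\<lambda>_. B). F (p(N := y)))"
    by (simp add: sum.cartesian_product case_prod_unfold)
  also have "\<dots> = (\<Sum>p\<in>PiE {..<N} (\<lambda>_. B). \<Sum>y\<in>B. F (p(N := y)))"
    by (rule sum.swap)
  finally show ?thesis .
qed

lemma path_prob_fun_upd:
  "path_prob \<pi> P (Suc (Suc M)) (p(Suc M := y)) = path_prob \<pi> P (Suc M) p * P $$ (p M, y)"
proof -
  have "(\<Prod>i<M. P $$ ((p(Suc M := y)) i, (p(Suc M := y)) (Suc i))) = (\<Prod>i<M. P $$ (p i, p (Suc i)))"
    by (rule prod.cong) auto
  then show ?thesis unfolding path_prob_def by (simp add: mult_ac)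
qed

lemma path_expect_cong:
  assumes "\<And>p. p \<in> PiE {..<N} (\<lambda>_. {..<n}) \<Longrightarrow> g p = h p"
  shows "path_expect n \<pi> P N g = path_expect n \<pi> P N h"
  unfolding path_expect_def using assms by (intro sum.cong) auto

lemma path_expect_sum:
  "path_expect n \<pi> P N (\<lambda>p. \<Sum>i\<in>I. g i p) = (\<Sum>i\<in>I. path_expect n \<pi> P N (g i))"
  unfolding path_expect_def by (simp add: sum_distrib_left sum.swap[of _ I])

lemma path_expect_last_step:
  assumes "\<And>p q. \<forall>i\<le>M. p i = q i \<Longrightarrow> G p = G q"
  shows "path_expect n \<pi> P (Suc (Suc M)) (\<lambda>p. G p * h (p (Suc M))) =
    path_expect n \<pi> P (Suc M) (\<lambda>p. G p * mat_act n P h (p M))"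
proof -
  have G: "G (p(Suc M := y)) = G p" for p y by (rule assms) auto
  have "path_expect n \<pi> P (Suc (Suc M)) (\<lambda>p. G p * h (p (Suc M))) =
      (\<Sum>p\<in>PiE {..<Suc M} (\<lambda>_. {..<n}).
         \<Sum>y<n. path_prob \<pi> P (Suc (Suc M)) (p(Suc M := y)) * (G (p(Suc M := y)) * h y))"
    unfolding path_expect_def by (subst sum_PiE_lessThan_Suc) auto
  also have "\<dots> = path_expect n \<pi> P (Suc M) (\<lambda>p. G p * mat_act n P h (p M))"
    unfolding path_expect_def path_prob_fun_upd G mat_act_def
    by (simp add: sum_distrib_left mult_ac)
  finally show ?thesis .
qed

lemma path_expect_drop_tail:
  assumes T: "transition_matrix n P" and G: "\<And>p q. \<forall>i\<le>M. p i = q i \<Longrightarrow> G p = G q"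
  shows "path_expect n \<pi> P (Suc M + e) G = path_expect n \<pi> P (Suc M) G"
proof (induction e)
  case (Suc e)
  have "path_expect n \<pi> P (Suc (Suc (M + e))) (\<lambda>p. G p * 1) =
      path_expect n \<pi> P (Suc (M + e)) (\<lambda>p. G p * mat_act n P (\<lambda>_. 1) (p (M + e)))"
    by (rule path_expect_last_step) (rule G, auto)
  also have "\<dots> = path_expect n \<pi> P (Suc (M + e)) G"
    using mat_act_const[OF T] by (intro path_expect_cong) (auto simp: PiE_iff)
  finally show ?case using Suc by simp
qed simp

lemma path_expect_single:
  assumes "transition_matrix n P" "reversible n \<pi> P"
  shows "path_expect n \<pi> P (Suc M) (\<lambda>p. u (p M)) = (\<Sum>x<n. \<pi> x * u x)"
proof (induction M arbitrary: u)
  case 0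
  show ?case
    unfolding path_expect_def by (subst sum_PiE_lessThan_Suc) (auto simp: path_prob_def)
next
  case (Suc M)
  have "path_expect n \<pi> P (Suc (Suc M)) (\<lambda>p. 1 * u (p (Suc M))) =
      path_expect n \<pi> P (Suc M) (\<lambda>p. 1 * mat_act n P u (p M))"
    by (rule path_expect_last_step) auto
  then show ?case using Suc reversible_stationary[OF assms] by simp
qed

lemma path_expect_pair:
  assumes "transition_matrix n P" "reversible n \<pi> P"
  shows "path_expect n \<pi> P (Suc (i + m)) (\<lambda>p. h (p i) * u (p (i + m))) =
    inner_w n \<pi> h ((mat_act n P ^^ m) u)"
proof (induction m arbitrary: u)
  case 0
  show ?case using path_expect_single[OF assms, of i "\<lambda>x. h x * u x"] by (simp add: inner_w_def mult_ac)
next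
  case (Suc m)
  have "path_expect n \<pi> P (Suc (Suc (i + m))) (\<lambda>p. h (p i) * u (p (Suc (i + m)))) =
      path_expect n \<pi> P (Suc (i + m)) (\<lambda>p. h (p i) * mat_act n P u (p (i + m)))"
    by (rule path_expect_last_step) auto
  also have "\<dots> = inner_w n \<pi> h ((mat_act n P ^^ m) (mat_act n P u))" by (rule Suc)
  finally show ?case by (simp add: funpow_Suc_right del: funpow.simps)
qed

lemma path_expect_pair_le:
  assumes "transition_matrix n P" "reversible n \<pi> P" "i \<le> j" "j < N"
  shows "path_expect n \<pi> P N (\<lambda>p. h (p i) * u (p j)) = inner_w n \<pi> h ((mat_act n P ^^ (j - i)) u)"
proof -
  obtain e where N: "N = Suc j + e" using \<open>j < N\<close> by (metis add_Suc less_iff_Suc_add)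
  have "path_expect n \<pi> P N (\<lambda>p. h (p i) * u (p j)) = path_expect n \<pi> P (Suc j) (\<lambda>p. h (p i) * u (p j))"
    unfolding N using \<open>i \<le> j\<close> by (intro path_expect_drop_tail[OF assms(1)]) auto
  also have "\<dots> = path_expect n \<pi> P (Suc (i + (j - i))) (\<lambda>p. h (p i) * u (p (i + (j - i))))"
    using \<open>i \<le> j\<close> by simp
  finally show ?thesis by (simp only: path_expect_pair[OF assms(1,2)])
qed

lemma var_sum_autocovariance:
  assumes T: "transition_matrix n P" and R: "reversible n \<pi> P"
    and mean: "(\<Sum>x<n. \<pi> x * f x) = 0"
  shows "var_sum n \<pi> P f N = (\<Sum>i<N. \<Sum>j<N. inner_w n \<pi> f ((mat_act n P ^^ (max i j - min i j)) f))"
proof -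
  have "path_expect n \<pi> P N (\<lambda>p. f (p i)) = 0" if "i < N" for i
    using path_expect_pair_le[OF T R le_refl that, of "\<lambda>_. 1" f] mean by (simp add: inner_w_def)
  then have mean_sum: "path_expect n \<pi> P N (\<lambda>p. \<Sum>i<N. f (p i)) = 0"
    by (simp add: path_expect_sum)
  have pair: "path_expect n \<pi> P N (\<lambda>p. f (p i) * f (p j)) =
      inner_w n \<pi> f ((mat_act n P ^^ (max i j - min i j)) f)" if "i < N" "j < N" for i j
  proof (cases "i \<le> j")
    case True
    then show ?thesis using path_expect_pair_le[OF T R True that(2)] by simp
  next
    case False
    then show ?thesis using path_expect_pair_le[OF T R _ that(1), of j f f] by (simp add: mult.commute)
  qed
  have "path_expect n \<pi> P N (\<lambda>p. (\<Sum>i<N. f (p i))\<^sup>2) =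
      (\<Sum>i<N. \<Sum>j<N. path_expect n \<pi> P N (\<lambda>p. f (p i) * f (p j)))"
    by (simp add: power2_eq_square sum_product path_expect_sum)
  then show ?thesis unfolding var_sum_def mean_sum using pair by simp
qed

section \<open>Asymptotic variance in an eigenbasis\<close>

definition autocorr_sum :: "nat \<Rightarrow> real \<Rightarrow> real" where
  "autocorr_sum N l = (\<Sum>i<N. \<Sum>j<N. l ^ (max i j - min i j))"

text \<open>The integrated autocorrelation time of an eigenfunction with eigenvalue \<open>l\<close>.\<close>

definition autocorr_time :: "real \<Rightarrow> real" where
  "autocorr_time l = (1 + l) / (1 - l)"

lemma autocorr_sum_Suc:
  "autocorr_sum (Suc N) l = autocorr_sum N l + 2 * l * (\<Sum>k<N. l ^ k) + 1"
proof -
  have "(\<Sum>i<N. l ^ (max i N - min i N)) = (\<Sum>i<N. l * l ^ (N - Suc i))"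
    by (intro sum.cong) (auto simp: Suc_diff_Suc[symmetric])
  also have "\<dots> = l * (\<Sum>k<N. l ^ k)"
    by (simp add: sum_distrib_left[symmetric] sum.nat_diff_reindex)
  finally have col: "(\<Sum>i<N. l ^ (max i N - min i N)) = l * (\<Sum>k<N. l ^ k)" .
  then have row: "(\<Sum>j<N. l ^ (max N j - min N j)) = l * (\<Sum>k<N. l ^ k)"
    by (simp add: max.commute min.commute)
  show ?thesis
    unfolding autocorr_sum_def using col row by (simp add: sum.distrib)
qed

lemma autocorr_sum_closed_form:
  "(1 - l)\<^sup>2 * autocorr_sum N l = real N * (1 + l) * (1 - l) - 2 * l * (1 - l ^ N)"
proof (induction N)
  case 0
  show ?case by (simp add: autocorr_sum_def)
next
  case (Suc N)
  have geom: "(1 - l) * (\<Sum>k<N. l ^ k) = 1 - l ^ N" by (rule one_diff_power_eq[symmetric])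
  have "(1 - l)\<^sup>2 * autocorr_sum (Suc N) l =
      (1 - l)\<^sup>2 * autocorr_sum N l + 2 * l * (1 - l) * ((1 - l) * (\<Sum>k<N. l ^ k)) + (1 - l)\<^sup>2"
    unfolding autocorr_sum_Suc by (simp add: algebra_simps power2_eq_square)
  also have "\<dots> = real (Suc N) * (1 + l) * (1 - l) - 2 * l * (1 - l ^ Suc N)"
    unfolding Suc geom by (simp add: algebra_simps power2_eq_square)
  finally show ?case .
qed

lemma autocorr_sum_limit:
  assumes "\<bar>l\<bar> \<le> 1" "l \<noteq> 1"
  shows "(\<lambda>N. autocorr_sum N l / real N) \<longlonglongrightarrow> autocorr_time l"
proof -
  define q where "q = (1 - l)\<^sup>2"
  have q: "q \<noteq> 0" using assms(2) by (simp add: q_def)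
  have eq: "autocorr_sum N l / real N = autocorr_time l - 2 * l / q * ((1 - l ^ N) / real N)"
    if "N > 0" for N
  proof -
    have "autocorr_sum N l = (real N * (1 + l) * (1 - l) - 2 * l * (1 - l ^ N)) / q"
      using autocorr_sum_closed_form[of l N] q by (simp add: q_def eq_divide_eq mult.commute)
    then have "autocorr_sum N l / real N =
        real N * (1 + l) * (1 - l) / q / real N - 2 * l * (1 - l ^ N) / q / real N"
      by (simp only: diff_divide_distrib)
    also have "2 * l * (1 - l ^ N) / q / real N = 2 * l / q * ((1 - l ^ N) / real N)"
      by simp
    also have "real N * (1 + l) * (1 - l) / q / real N = autocorr_time l"
      using that assms(2) by (simp add: q_def autocorr_time_def power2_eq_square)
    finally show ?thesis .
  qed
  have "(\<lambda>N. (1 - l ^ N) / real N) \<longlonglongrightarrow> 0"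
  proof (rule tendsto_0_le[OF lim_const_over_n[of 2], where K = 1])
    have "\<bar>l ^ N\<bar> \<le> 1" for N using assms(1) by (simp add: power_abs power_le_one)
    then have "\<bar>1 - l ^ N\<bar> \<le> 2" for N by (simp add: abs_le_iff)
    then show "\<forall>\<^sub>F N in sequentially. norm ((1 - l ^ N) / real N) \<le> norm (2 / real N) * 1"
      by (intro always_eventually allI) (simp add: abs_div divide_right_mono)
  qed
  then have "(\<lambda>N. autocorr_time l - 2 * l / q * ((1 - l ^ N) / real N))
      \<longlonglongrightarrow> autocorr_time l - 2 * l / q * 0"
    by (intro tendsto_intros)
  moreover have "\<forall>\<^sub>F N in sequentially.
      autocorr_time l - 2 * l / q * ((1 - l ^ N) / real N) = autocorr_sum N l / real N"
    using eq by (intro eventually_sequentiallyI[of 1]) auto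
  ultimately show ?thesis by (simp add: Lim_transform_eventually)
qed

lemma autocorr_time_le_iff:
  assumes "x < 1" "y < 1"
  shows "autocorr_time x \<le> autocorr_time y \<longleftrightarrow> x \<le> y"
proof -
  have "autocorr_time x \<le> autocorr_time y \<longleftrightarrow> (1 + x) * (1 - y) \<le> (1 + y) * (1 - x)"
    using assms unfolding autocorr_time_def by (simp add: divide_le_eq le_divide_eq mult.commute)
  also have "\<dots> \<longleftrightarrow> x \<le> y" by (simp add: algebra_simps)
  finally show ?thesis .
qed

lemma mat_act_pow_eigen_expansion:
  assumes w: "\<forall>x<n. w x > 0" and \<phi>: "orthonormal_eigenvectors n w A \<phi> d n"
  shows "x < n \<Longrightarrow> (mat_act n A ^^ m) f x = (\<Sum>k<n. (inner_w n w (\<phi> k) f * d k ^ m) * \<phi> k x)"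
proof (induction m arbitrary: x)
  case 0
  show ?case
    using orthonormal_w_expansion[OF w _ 0] \<phi> by (simp add: orthonormal_eigenvectors_def)
next
  case (Suc m)
  have "(mat_act n A ^^ Suc m) f x = mat_act n A ((mat_act n A ^^ m) f) x" by simp
  also have "\<dots> = mat_act n A (\<lambda>y. \<Sum>k<n. (inner_w n w (\<phi> k) f * d k ^ m) * \<phi> k y) x"
    by (rule mat_act_cong) (rule Suc.IH)
  also have "\<dots> = (\<Sum>k<n. (inner_w n w (\<phi> k) f * d k ^ m) * mat_act n A (\<phi> k) x)"
    by (simp add: mat_act_sum)
  also have "\<dots> = (\<Sum>k<n. (inner_w n w (\<phi> k) f * d k ^ Suc m) * \<phi> k x)"
    using \<phi> Suc.prems by (intro sum.cong) (auto simp: orthonormal_eigenvectors_def)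
  finally show ?case .
qed

lemma inner_w_mat_act_pow:
  assumes w: "\<forall>x<n. w x > 0" and \<phi>: "orthonormal_eigenvectors n w A \<phi> d n"
  shows "inner_w n w f ((mat_act n A ^^ m) f) = (\<Sum>k<n. (inner_w n w (\<phi> k) f)\<^sup>2 * d k ^ m)"
proof -
  have "inner_w n w f ((mat_act n A ^^ m) f) =
      inner_w n w f (\<lambda>x. \<Sum>k<n. (inner_w n w (\<phi> k) f * d k ^ m) * \<phi> k x)"
    using mat_act_pow_eigen_expansion[OF w \<phi>] by (intro inner_w_cong) auto
  also have "\<dots> = (\<Sum>k<n. (inner_w n w (\<phi> k) f * d k ^ m) * inner_w n w f (\<phi> k))"
    by (rule inner_w_sum_right)
  also have "\<dots> = (\<Sum>k<n. (inner_w n w (\<phi> k) f)\<^sup>2 * d k ^ m)"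
    by (intro sum.cong refl, subst inner_w_commute) (simp add: power2_eq_square)
  finally show ?thesis .
qed

lemma asym_var_eigen_expansion:
  assumes w: "\<forall>x<n. \<pi> x > 0" and T: "transition_matrix n P" and R: "reversible n \<pi> P"
    and \<phi>: "orthonormal_eigenvectors n \<pi> P \<phi> d n"
    and d: "\<forall>k<n. inner_w n \<pi> (\<phi> k) f \<noteq> 0 \<longrightarrow> \<bar>d k\<bar> \<le> 1 \<and> d k \<noteq> 1"
    and mean: "(\<Sum>x<n. \<pi> x * f x) = 0"
  shows "asym_var n \<pi> f P = (\<Sum>k<n. (inner_w n \<pi> (\<phi> k) f)\<^sup>2 * autocorr_time (d k))"
proof -
  define a where "a k = (inner_w n \<pi> (\<phi> k) f)\<^sup>2" for k
  have "var_sum n \<pi> P f N = (\<Sum>i<N. \<Sum>j<N. \<Sum>k<n. a k * d k ^ (max i j - min i j))" for N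
    unfolding var_sum_autocovariance[OF T R mean] inner_w_mat_act_pow[OF w \<phi>] a_def ..
  also have "\<dots> N = (\<Sum>k<n. a k * autocorr_sum N (d k))" for N
    unfolding autocorr_sum_def sum_distrib_left by (simp only: sum.swap[of _ "{..<N}" "{..<n}"])
  finally have "var_sum n \<pi> P f N / real N = (\<Sum>k<n. a k * (autocorr_sum N (d k) / real N))" for N
    by (simp add: sum_divide_distrib)
  moreover have "(\<lambda>N. \<Sum>k<n. a k * (autocorr_sum N (d k) / real N))
      \<longlonglongrightarrow> (\<Sum>k<n. a k * autocorr_time (d k))"
  proof (intro tendsto_sum)
    fix k assume "k \<in> {..<n}"
    show "(\<lambda>N. a k * (autocorr_sum N (d k) / real N)) \<longlonglongrightarrow> a k * autocorr_time (d k)"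
    proof (cases "inner_w n \<pi> (\<phi> k) f = 0")
      case False
      then have "\<bar>d k\<bar> \<le> 1" "d k \<noteq> 1" using d \<open>k \<in> {..<n}\<close> by auto
      then show ?thesis by (intro tendsto_mult tendsto_const autocorr_sum_limit)
    qed (simp add: a_def)
  qed
  ultimately show ?thesis unfolding asym_var_def a_def by (simp add: limI)
qed

section \<open>Spectrum of a reversible irreducible chain\<close>

lemma stochastic_eigenvalue_abs_le_1:
  assumes T: "transition_matrix n P" and ev: "\<forall>x<n. mat_act n P u x = lam * u x"
    and "z < n" "u z \<noteq> 0"
  shows "\<bar>lam\<bar> \<le> 1"
proof -
  define M where "M = Max ((\<lambda>x. \<bar>u x\<bar>) ` {..<n})"
  have M_ge: "\<bar>u x\<bar> \<le> M" if "x < n" for x unfolding M_def using that by (intro Max_ge) auto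
  have "M \<in> (\<lambda>x. \<bar>u x\<bar>) ` {..<n}" unfolding M_def using \<open>z < n\<close> by (intro Max_in) auto
  then obtain x0 where x0: "x0 < n" "\<bar>u x0\<bar> = M" by auto
  have "M > 0" using M_ge[OF \<open>z < n\<close>] \<open>u z \<noteq> 0\<close> by linarith
  have "\<bar>lam\<bar> * M = \<bar>\<Sum>y<n. P $$ (x0,y) * u y\<bar>"
    using ev x0 unfolding mat_act_def by (simp add: abs_mult)
  also have "\<dots> \<le> (\<Sum>y<n. P $$ (x0,y) * M)"
  proof (rule order_trans[OF sum_abs sum_mono])
    fix y assume "y \<in> {..<n}"
    then have "P $$ (x0,y) \<ge> 0" "\<bar>u y\<bar> \<le> M" using T x0 M_ge by (auto simp: transition_matrix_def)
    then show "\<bar>P $$ (x0,y) * u y\<bar> \<le> P $$ (x0,y) * M" by (simp add: abs_mult mult_left_mono)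
  qed
  also have "\<dots> = M" using T x0 by (simp add: transition_matrix_def sum_distrib_right[symmetric])
  finally show ?thesis using \<open>M > 0\<close> by simp
qed

lemma transition_matrix_pow_nonneg:
  assumes T: "transition_matrix n P"
  shows "x < n \<Longrightarrow> y < n \<Longrightarrow> (P ^\<^sub>m k) $$ (x,y) \<ge> 0"
proof (induction k arbitrary: y)
  case 0
  have "P \<in> carrier_mat n n" using T by (simp add: transition_matrix_def)
  then show ?case using 0 by simp
next
  case (Suc k)
  have "P \<in> carrier_mat n n" using T by (simp add: transition_matrix_def)
  then have "(P ^\<^sub>m Suc k) $$ (x,y) = (\<Sum>z<n. (P ^\<^sub>m k) $$ (x,z) * P $$ (z,y))"
    using Suc.prems by (simp add: scalar_prod_def atLeast0LessThan)
  also have "\<dots> \<ge> 0"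
    using Suc T by (auto simp: transition_matrix_def intro!: sum_nonneg mult_nonneg_nonneg)
  finally show ?case .
qed

lemma weighted_average_eq_max:
  fixes a b :: "nat \<Rightarrow> real"
  assumes "finite A" "\<forall>y\<in>A. a y \<ge> 0" "(\<Sum>y\<in>A. a y) = 1" "\<forall>y\<in>A. b y \<le> M"
    and "(\<Sum>y\<in>A. a y * b y) = M" "y0 \<in> A" "a y0 > 0"
  shows "b y0 = M"
proof -
  have "(\<Sum>y\<in>A. a y * (M - b y)) = (\<Sum>y\<in>A. M * a y - a y * b y)"
    by (rule sum.cong) (auto simp: right_diff_distrib)
  also have "\<dots> = M * (\<Sum>y\<in>A. a y) - (\<Sum>y\<in>A. a y * b y)"
    by (simp only: sum_subtractf sum_distrib_left)
  also have "\<dots> = 0" using assms(3,5) by simp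
  finally have "(\<Sum>y\<in>A. a y * (M - b y)) = 0" .
  moreover have nonneg: "\<And>y. y \<in> A \<Longrightarrow> a y * (M - b y) \<ge> 0"
    using assms(2,4) by (simp add: mult_nonneg_nonneg)
  ultimately have "\<forall>y\<in>A. a y * (M - b y) = 0"
    using sum_nonneg_eq_0_iff[OF assms(1) nonneg] by simp
  then have "a y0 * (M - b y0) = 0" using assms(6) by blast
  then show ?thesis using assms(7) by simp
qed

lemma harmonic_max_reachable:
  assumes T: "transition_matrix n P" and h: "\<forall>x<n. mat_act n P h x = h x"
    and max: "\<forall>x<n. h x \<le> M" and x0: "x0 < n" "h x0 = M"
  shows "(P ^\<^sub>m k) $$ (x0,z) > 0 \<Longrightarrow> z < n \<Longrightarrow> h z = M"
proof (induction k arbitrary: z)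
  case 0
  have "P \<in> carrier_mat n n" using T by (simp add: transition_matrix_def)
  then show ?case using 0 x0 by (simp split: if_splits)
next
  case (Suc k)
  have P: "P \<in> carrier_mat n n" using T by (simp add: transition_matrix_def)
  have "\<exists>u<n. (P ^\<^sub>m k) $$ (x0,u) * P $$ (u,z) > 0"
  proof (rule ccontr)
    assume "\<not> ?thesis"
    then have "(\<Sum>u<n. (P ^\<^sub>m k) $$ (x0,u) * P $$ (u,z)) \<le> 0" by (intro sum_nonpos) auto
    then show False using Suc.prems P x0(1) by (simp add: scalar_prod_def atLeast0LessThan)
  qed
  then obtain u where u: "u < n" "(P ^\<^sub>m k) $$ (x0,u) * P $$ (u,z) > 0" by blast
  moreover have "(P ^\<^sub>m k) $$ (x0,u) \<ge> 0" "P $$ (u,z) \<ge> 0"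
    using transition_matrix_pow_nonneg[OF T x0(1) u(1)] T u(1) Suc.prems(2)
    by (auto simp: transition_matrix_def)
  ultimately have pos: "(P ^\<^sub>m k) $$ (x0,u) > 0" "P $$ (u,z) > 0"
    by (auto simp: zero_less_mult_iff)
  have "h u = M" using Suc.IH[OF pos(1) u(1)] .
  show ?case
  proof (rule weighted_average_eq_max[of "{..<n}" "\<lambda>y. P $$ (u,y)" h M z])
    show "(\<Sum>y\<in>{..<n}. P $$ (u,y) * h y) = M" using h u(1) \<open>h u = M\<close> unfolding mat_act_def by simp
  qed (use T u(1) max pos(2) Suc.prems(2) in \<open>auto simp: transition_matrix_def\<close>)
qed

lemma irreducible_harmonic_const:
  assumes T: "transition_matrix n P" and I: "irreducible_mc n P"
    and h: "\<forall>x<n. mat_act n P h x = h x" and "x < n" "y < n"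
  shows "h x = h y"
proof -
  define M where "M = Max (h ` {..<n})"
  have max: "\<forall>x<n. h x \<le> M" unfolding M_def by (auto intro: Max_ge)
  have "M \<in> h ` {..<n}" unfolding M_def using \<open>x < n\<close> by (intro Max_in) auto
  then obtain x0 where x0: "x0 < n" "h x0 = M" by auto
  have "h z = M" if "z < n" for z
  proof -
    obtain k where "(P ^\<^sub>m k) $$ (x0,z) > 0" using I x0(1) \<open>z < n\<close> unfolding irreducible_mc_def by blast
    then show ?thesis using harmonic_max_reachable[OF T h max x0] \<open>z < n\<close> by blast
  qed
  then show ?thesis using \<open>x < n\<close> \<open>y < n\<close> by simp
qed

lemma eigenvalue_one_const:
  assumes T: "transition_matrix n P" and I: "irreducible_mc n P"
    and \<phi>: "orthonormal_eigenvectors n w P \<phi> d n" and "k < n" "d k = 1"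
  shows "\<forall>x<n. \<phi> k x = \<phi> k 0"
proof -
  have "\<forall>x<n. mat_act n P (\<phi> k) x = \<phi> k x"
    using \<phi> \<open>k < n\<close> \<open>d k = 1\<close> unfolding orthonormal_eigenvectors_def by simp
  then show ?thesis using irreducible_harmonic_const[OF T I] \<open>k < n\<close> by auto
qed

lemma eigenvalue_one_unique:
  assumes pd: "prob_dist n \<pi>" and T: "transition_matrix n P" and I: "irreducible_mc n P"
    and \<phi>: "orthonormal_eigenvectors n \<pi> P \<phi> d n"
    and "k < n" "l < n" "d k = 1" "d l = 1"
  shows "k = l"
proof (rule ccontr)
  assume "k \<noteq> l"
  have s1: "(\<Sum>x<n. \<pi> x) = 1" using pd by (simp add: prob_dist_def)
  obtain a b where a: "\<forall>x<n. \<phi> k x = a" and b: "\<forall>x<n. \<phi> l x = b"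
    using eigenvalue_one_const[OF T I \<phi>] assms(5-8) by blast
  have ab: "inner_w n \<pi> (\<phi> k) (\<phi> l) = a * b"
    using inner_w_const_left[OF a, of \<pi> "\<phi> l"] b s1 by (simp add: sum_distrib_right[symmetric])
  have aa: "inner_w n \<pi> (\<phi> k) (\<phi> k) = a * a"
    using inner_w_const_left[OF a, of \<pi> "\<phi> k"] a s1 by (simp add: sum_distrib_right[symmetric])
  have bb: "inner_w n \<pi> (\<phi> l) (\<phi> l) = b * b"
    using inner_w_const_left[OF b, of \<pi> "\<phi> l"] b s1 by (simp add: sum_distrib_right[symmetric])
  have "a * b = 0" "a * a = 1" "b * b = 1"
    using \<phi> assms(5,6) \<open>k \<noteq> l\<close> ab aa bb
    unfolding orthonormal_eigenvectors_def orthonormal_w_def by auto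
  then show False by (cases "a = 0") auto
qed

text \<open>The constant function is fixed by \<open>P\<close>; expanding it in the eigenbasis shows that some
  eigenvector is not orthogonal to it, and self-adjointness forces its eigenvalue to be \<open>1\<close>.\<close>

lemma exists_eigenvalue_one:
  assumes w: "\<forall>x<n. \<pi> x > 0" and T: "transition_matrix n P" and R: "reversible n \<pi> P"
    and \<phi>: "orthonormal_eigenvectors n \<pi> P \<phi> d n" and "0 < n"
  shows "\<exists>k<n. d k = 1"
proof (rule ccontr)
  assume none: "\<not> (\<exists>k<n. d k = 1)"
  have "inner_w n \<pi> (\<phi> k) (\<lambda>_. 1) = 0" if "k < n" for k
  proof -
    have "inner_w n \<pi> (\<phi> k) (\<lambda>_. 1) = inner_w n \<pi> (\<phi> k) (mat_act n P (\<lambda>_. 1))"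
      using mat_act_const[OF T] by (intro inner_w_cong) auto
    also have "\<dots> = d k * inner_w n \<pi> (\<phi> k) (\<lambda>_. 1)"
      using \<phi> that unfolding orthonormal_eigenvectors_def
      by (intro inner_w_mat_act_eigenvector[OF R]) auto
    finally have "(1 - d k) * inner_w n \<pi> (\<phi> k) (\<lambda>_. 1) = 0"
      by (simp add: algebra_simps)
    then show ?thesis using none that by simp
  qed
  then have "(\<Sum>j<n. inner_w n \<pi> (\<phi> j) (\<lambda>_. 1) * \<phi> j 0) = 0" by simp
  moreover have "(\<lambda>_. 1::real) 0 = (\<Sum>j<n. inner_w n \<pi> (\<phi> j) (\<lambda>_. 1) * \<phi> j 0)"
    using \<phi> by (intro orthonormal_w_expansion[OF w _ \<open>0 < n\<close>]) (simp add: orthonormal_eigenvectors_def)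
  ultimately show False by simp
qed

lemma irreducible_eigenbasis_spectrum:
  assumes pd: "prob_dist n \<pi>" and T: "transition_matrix n P" and I: "irreducible_mc n P"
    and R: "reversible n \<pi> P" and \<phi>: "decreasing_eigenbasis n \<pi> P \<phi> d"
  shows "d 0 = 1" and "\<forall>x<n. \<phi> 0 x = \<phi> 0 0" and "\<forall>k<n. 0 < k \<longrightarrow> d k < 1"
    and "\<forall>k<n. \<bar>d k\<bar> \<le> 1"
proof -
  have w: "\<forall>x<n. \<pi> x > 0" using pd by (simp add: prob_dist_def)
  have "0 < n" using pd by (cases n) (auto simp: prob_dist_def)
  have \<phi>': "orthonormal_eigenvectors n \<pi> P \<phi> d n"
    and dec: "\<forall>i j. i \<le> j \<longrightarrow> j < n \<longrightarrow> d j \<le> d i"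
    using \<phi> unfolding decreasing_eigenbasis_def by auto
  show bound: "\<forall>k<n. \<bar>d k\<bar> \<le> 1"
  proof (intro allI impI)
    fix k assume "k < n"
    then have "inner_w n \<pi> (\<phi> k) (\<phi> k) \<noteq> 0"
      using \<phi>' unfolding orthonormal_eigenvectors_def orthonormal_w_def by simp
    then obtain z where "z < n" "\<phi> k z \<noteq> 0" using inner_w_self_eq_0_iff[OF w] by blast
    then show "\<bar>d k\<bar> \<le> 1"
      using stochastic_eigenvalue_abs_le_1[OF T] \<phi>' \<open>k < n\<close>
      unfolding orthonormal_eigenvectors_def by blast
  qed
  obtain k where k: "k < n" "d k = 1" using exists_eigenvalue_one[OF w T R \<phi>' \<open>0 < n\<close>] by blast
  have "d k \<le> d 0" using dec k(1) by simp
  moreover have "d 0 \<le> 1" using bound \<open>0 < n\<close> by (simp add: abs_le_iff)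
  ultimately show d0: "d 0 = 1" using k(2) by simp
  show "\<forall>x<n. \<phi> 0 x = \<phi> 0 0" by (rule eigenvalue_one_const[OF T I \<phi>' \<open>0 < n\<close> d0])
  show "\<forall>k<n. 0 < k \<longrightarrow> d k < 1"
  proof (intro allI impI)
    fix k assume "k < n" "0 < k"
    then have "d k \<noteq> 1" using eigenvalue_one_unique[OF pd T I \<phi>' \<open>k < n\<close> \<open>0 < n\<close> _ d0] by auto
    moreover have "d k \<le> 1" using bound \<open>k < n\<close> by (simp add: abs_le_iff)
    ultimately show "d k < 1" by simp
  qed
qed

lemma irreducible_eigenbasis_mean_zero_iff:
  assumes pd: "prob_dist n \<pi>" and T: "transition_matrix n P" and I: "irreducible_mc n P"
    and R: "reversible n \<pi> P" and \<phi>: "decreasing_eigenbasis n \<pi> P \<phi> d"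
  shows "(\<Sum>x<n. \<pi> x * f x) = 0 \<longleftrightarrow> inner_w n \<pi> (\<phi> 0) f = 0"
proof -
  have const: "\<forall>x<n. \<phi> 0 x = \<phi> 0 0" by (rule irreducible_eigenbasis_spectrum(2)[OF assms])
  have "0 < n" using pd by (cases n) (auto simp: prob_dist_def)
  then have "inner_w n \<pi> (\<phi> 0) (\<phi> 0) = 1"
    using \<phi> unfolding decreasing_eigenbasis_def orthonormal_eigenvectors_def orthonormal_w_def by simp
  then have "\<phi> 0 0 \<noteq> 0" using inner_w_const_left[OF const, of \<pi> "\<phi> 0"] by auto
  moreover have "inner_w n \<pi> (\<phi> 0) f = \<phi> 0 0 * (\<Sum>x<n. \<pi> x * f x)"
    by (rule inner_w_const_left[OF const])
  ultimately show ?thesis by simp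
qed

lemma asym_var_irreducible:
  assumes pd: "prob_dist n \<pi>" and T: "transition_matrix n P" and I: "irreducible_mc n P"
    and R: "reversible n \<pi> P" and \<phi>: "decreasing_eigenbasis n \<pi> P \<phi> d"
    and mean: "(\<Sum>x<n. \<pi> x * f x) = 0"
  shows "asym_var n \<pi> f P = (\<Sum>k<n. (inner_w n \<pi> (\<phi> k) f)\<^sup>2 * autocorr_time (d k))"
proof (rule asym_var_eigen_expansion[OF _ T R _ _ mean])
  show "\<forall>x<n. \<pi> x > 0" using pd by (simp add: prob_dist_def)
  show "orthonormal_eigenvectors n \<pi> P \<phi> d n" using \<phi> by (simp add: decreasing_eigenbasis_def)
  have "inner_w n \<pi> (\<phi> 0) f = 0"
    using irreducible_eigenbasis_mean_zero_iff[OF pd T I R \<phi>] mean by blast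
  then show "\<forall>k<n. inner_w n \<pi> (\<phi> k) f \<noteq> 0 \<longrightarrow> \<bar>d k\<bar> \<le> 1 \<and> d k \<noteq> 1"
    using irreducible_eigenbasis_spectrum(3,4)[OF pd T I R \<phi>] by (metis gr0I less_irrefl)
qed

lemma sum_squares_weighted_ge:
  fixes c g :: "nat \<Rightarrow> real"
  assumes "\<forall>k\<in>K. c k \<noteq> 0 \<longrightarrow> m \<le> g k"
  shows "m * (\<Sum>k\<in>K. (c k)\<^sup>2) \<le> (\<Sum>k\<in>K. (c k)\<^sup>2 * g k)"
  unfolding sum_distrib_left
proof (rule sum_mono)
  fix k assume "k \<in> K"
  then show "m * (c k)\<^sup>2 \<le> (c k)\<^sup>2 * g k"
    using assms by (cases "c k = 0") (simp_all add: mult.commute mult_left_mono)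
qed

lemma sum_squares_weighted_le:
  fixes c g :: "nat \<Rightarrow> real"
  assumes "\<forall>k\<in>K. c k \<noteq> 0 \<longrightarrow> g k \<le> m"
  shows "(\<Sum>k\<in>K. (c k)\<^sup>2 * g k) \<le> m * (\<Sum>k\<in>K. (c k)\<^sup>2)"
  unfolding sum_distrib_left
proof (rule sum_mono)
  fix k assume "k \<in> K"
  then show "(c k)\<^sup>2 * g k \<le> m * (c k)\<^sup>2"
    using assms by (cases "c k = 0") (simp_all add: mult.commute mult_left_mono)
qed

lemma asym_var_lower_bound:
  assumes pd: "prob_dist n \<pi>" and T: "transition_matrix n P" and I: "irreducible_mc n P"
    and R: "reversible n \<pi> P" and \<phi>: "decreasing_eigenbasis n \<pi> P \<phi> d"
    and mean: "(\<Sum>x<n. \<pi> x * f x) = 0"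
    and high: "\<forall>k<n. i < k \<longrightarrow> inner_w n \<pi> (\<phi> k) f = 0" and "i < n"
  shows "autocorr_time (d i) * inner_w n \<pi> f f \<le> asym_var n \<pi> f P"
proof -
  have w: "\<forall>x<n. \<pi> x > 0" using pd by (simp add: prob_dist_def)
  have on: "orthonormal_w n \<pi> \<phi> n"
    using \<phi> by (simp add: decreasing_eigenbasis_def orthonormal_eigenvectors_def)
  have low: "inner_w n \<pi> (\<phi> 0) f = 0"
    using irreducible_eigenbasis_mean_zero_iff[OF pd T I R \<phi>] mean by blast
  show ?thesis
    unfolding asym_var_irreducible[OF pd T I R \<phi> mean] orthonormal_w_parseval[OF w on]
  proof (rule sum_squares_weighted_ge, intro ballI impI)
    fix k assume "k \<in> {..<n}" "inner_w n \<pi> (\<phi> k) f \<noteq> 0"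
    then have "0 < k" "k \<le> i" "k < n" using high low by (auto intro: gr0I leI)
    then show "autocorr_time (d i) \<le> autocorr_time (d k)"
      using autocorr_time_le_iff irreducible_eigenbasis_spectrum(3)[OF pd T I R \<phi>] \<phi> \<open>i < n\<close>
      unfolding decreasing_eigenbasis_def by auto
  qed
qed

lemma asym_var_upper_bound:
  assumes pd: "prob_dist n \<pi>" and T: "transition_matrix n P" and I: "irreducible_mc n P"
    and R: "reversible n \<pi> P" and \<phi>: "decreasing_eigenbasis n \<pi> P \<phi> d"
    and mean: "(\<Sum>x<n. \<pi> x * f x) = 0"
    and low: "\<forall>k<i. inner_w n \<pi> (\<phi> k) f = 0" and "0 < i" "i < n"
  shows "asym_var n \<pi> f P \<le> autocorr_time (d i) * inner_w n \<pi> f f"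
proof -
  have w: "\<forall>x<n. \<pi> x > 0" using pd by (simp add: prob_dist_def)
  have on: "orthonormal_w n \<pi> \<phi> n"
    using \<phi> by (simp add: decreasing_eigenbasis_def orthonormal_eigenvectors_def)
  show ?thesis
    unfolding asym_var_irreducible[OF pd T I R \<phi> mean] orthonormal_w_parseval[OF w on]
  proof (rule sum_squares_weighted_le, intro ballI impI)
    fix k assume "k \<in> {..<n}" "inner_w n \<pi> (\<phi> k) f \<noteq> 0"
    then have "i \<le> k" "k < n" using low by (auto intro: leI)
    then show "autocorr_time (d k) \<le> autocorr_time (d i)"
      using autocorr_time_le_iff irreducible_eigenbasis_spectrum(3)[OF pd T I R \<phi>] \<phi> \<open>0 < i\<close>
      unfolding decreasing_eigenbasis_def by auto
  qed
qed

text \<open>The dimension count behind the Courant-Fischer min-max theorem.\<close>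

lemma exists_orthogonal_in_span:
  assumes \<phi>: "orthonormal_w n w \<phi> n" and "i < n"
  shows "\<exists>f. (\<exists>x<n. f x \<noteq> 0) \<and> (\<forall>k<n. i < k \<longrightarrow> inner_w n w (\<phi> k) f = 0) \<and>
    (\<forall>k<i. inner_w n w (\<psi> k) f = 0)"
proof -
  obtain c j where c: "j \<le> i" "c j \<noteq> 0"
    "\<forall>k<i. (\<Sum>l\<in>{..i}. c l * inner_w n w (\<psi> k) (\<phi> l)) = 0"
    using exists_nontrivial_null_combination[of "{..i}" i "\<lambda>l k. inner_w n w (\<psi> k) (\<phi> l)"] by auto
  define f where "f = (\<lambda>x. \<Sum>l\<in>{..i}. c l * \<phi> l x)"
  have sub: "{..i} \<subseteq> {..<n}" using \<open>i < n\<close> by auto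
  have "\<exists>x<n. f x \<noteq> 0"
    using orthonormal_w_combination_nonzero[OF \<phi> sub] c(1,2) unfolding f_def by simp
  moreover have "\<forall>k<n. i < k \<longrightarrow> inner_w n w (\<phi> k) f = 0"
    using inner_w_orthonormal_combination[OF \<phi> sub] unfolding f_def by simp
  moreover have "\<forall>k<i. inner_w n w (\<psi> k) f = 0"
    using c(3) unfolding f_def inner_w_sum_right by simp
  ultimately show ?thesis by blast
qed

lemma eigenvalue_le_of_asym_var_le:
  assumes pd: "prob_dist n \<pi>"
    and TP: "transition_matrix n P" and TQ: "transition_matrix n Q"
    and IP: "irreducible_mc n P" and IQ: "irreducible_mc n Q"
    and RP: "reversible n \<pi> P" and RQ: "reversible n \<pi> Q"
    and \<phi>: "decreasing_eigenbasis n \<pi> P \<phi> d" and \<psi>: "decreasing_eigenbasis n \<pi> Q \<psi> e"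
    and dom: "\<forall>f. asym_var n \<pi> f P \<le> asym_var n \<pi> f Q" and "i < n"
  shows "d i \<le> e i"
proof (cases "i = 0")
  case True
  then show ?thesis
    using irreducible_eigenbasis_spectrum(1)[OF pd TP IP RP \<phi>]
      irreducible_eigenbasis_spectrum(1)[OF pd TQ IQ RQ \<psi>] by simp
next
  case False
  have w: "\<forall>x<n. \<pi> x > 0" using pd by (simp add: prob_dist_def)
  have "orthonormal_w n \<pi> \<phi> n"
    using \<phi> by (simp add: decreasing_eigenbasis_def orthonormal_eigenvectors_def)
  then obtain f where f: "\<exists>x<n. f x \<noteq> 0" "\<forall>k<n. i < k \<longrightarrow> inner_w n \<pi> (\<phi> k) f = 0"
    "\<forall>k<i. inner_w n \<pi> (\<psi> k) f = 0"
    using exists_orthogonal_in_span[OF _ \<open>i < n\<close>] by blast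
  have mean: "(\<Sum>x<n. \<pi> x * f x) = 0"
    using irreducible_eigenbasis_mean_zero_iff[OF pd TQ IQ RQ \<psi>] f(3) False by simp
  have "autocorr_time (d i) * inner_w n \<pi> f f \<le> asym_var n \<pi> f P"
    by (rule asym_var_lower_bound[OF pd TP IP RP \<phi> mean f(2) \<open>i < n\<close>])
  also have "\<dots> \<le> asym_var n \<pi> f Q" using dom by blast
  also have "\<dots> \<le> autocorr_time (e i) * inner_w n \<pi> f f"
    using False by (intro asym_var_upper_bound[OF pd TQ IQ RQ \<psi> mean f(3) _ \<open>i < n\<close>]) simp
  finally have "autocorr_time (d i) \<le> autocorr_time (e i)"
    using inner_w_self_pos[OF w] f(1) by (auto simp: mult_le_cancel_right)
  then show ?thesis
    using autocorr_time_le_iff irreducible_eigenbasis_spectrum(3)[OF pd TP IP RP \<phi>]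
      irreducible_eigenbasis_spectrum(3)[OF pd TQ IQ RQ \<psi>] \<open>i < n\<close> False by auto
qed

theorem proposition5:
  fixes n :: nat and \<pi> :: "nat \<Rightarrow> real" and P Q :: "real mat"
  assumes "prob_dist n \<pi>"
    and "transition_matrix n P" and "transition_matrix n Q"
    and "irreducible_mc n P" and "irreducible_mc n Q"
    and "reversible n \<pi> P" and "reversible n \<pi> Q"
    and "efficiency_dominates n \<pi> P Q"
  shows "eigen_dominates P Q"
proof -
  have w: "\<forall>x<n. \<pi> x > 0" using assms(1) by (simp add: prob_dist_def)
  obtain \<phi> d where \<phi>: "decreasing_eigenbasis n \<pi> P \<phi> d"
    using decreasing_eigenbasis_exists[OF w assms(6)] by blast
  obtain \<psi> e where \<psi>: "decreasing_eigenbasis n \<pi> Q \<psi> e"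
    using decreasing_eigenbasis_exists[OF w assms(7)] by blast
  have "d i \<le> e i" if "i < n" for i
    using eigenvalue_le_of_asym_var_le[OF assms(1-7) \<phi> \<psi> _ that] assms(8)
    unfolding efficiency_dominates_def by blast
  moreover have "sorted_eigenvalues P (map d [0..<n])" "sorted_eigenvalues Q (map e [0..<n])"
    using sorted_eigenvalues_of_decreasing_eigenbasis \<phi> \<psi> assms(2,3)
    by (auto simp: transition_matrix_def)
  ultimately show ?thesis unfolding eigen_dominates_def by fastforce
qed

end
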